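(* Let $M$ be a strong $r$-helix hypersurface in $E^n$ with space of helix directions $H(M)\subset\mathbb{R}^n$. Let $\alpha: I\subset\mathbb{R}\to M$ be a unit speed (arc-length parametrized) curve on $M$ with Frenet frame $\{V_1(s),\dots,V_n(s)\}$. If $\alpha$ is a geodesic curve on $M$, then for every $d\in H(M)$, $d\in\mathrm{Sp}\{V_2'\}^\perp$ along $\alpha$, i.e. $\langle V_2'(s),d\rangle=0$ for all $s\in I$.
   Context: $\langle\cdot,\cdot\rangle$ is the standard inner product on $E^n=\mathbb{R}^n$. For a hypersurface $M\subset\mathbb{R}^n$ with unit normal $N$, a vector $d$ is a helix direction of $M$ if the angle between $d$ and $T_pM$ is the same for all $p\in M$, equivalently $\langle N,d\rangle$ is constant on $M$. $H(M)$ is the set of helix directions; $M$ is a strong $r$-helix if $H(M)$ is an $r$-dimensional linear subspace. The Frenet frame of a unit speed curve with nonvanishing curvatures $k_i$ is the orthonormal frame $\{V_1=\alpha',V_2,\dots,V_n\}$ with $V_1'=k_1V_2$, $V_i'=-k_{i-1}V_{i-1}+k_iV_{i+1}$ ($1<i<n$), $V_n'=-k_{n-1}V_{n-1}$. A curve on $M$ is a geodesic if $\alpha''$ is normal to $M$. $\mathrm{Sp}\{v\}^\perp$ is the orthogonal complement of the span of $v$. *)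

theory Defs
  imports "HOL-Analysis.Analysis"
begin

definition hypersurface_with_normal :: "(real^'n) set \<Rightarrow> (real^'n \<Rightarrow> real^'n) \<Rightarrow> bool" where
  "hypersurface_with_normal M N \<longleftrightarrow>
     continuous_on M N \<and>
     (\<forall>p\<in>M. \<exists>U g G. open U \<and> p \<in> U \<and> continuous_on U G \<and>
        (\<forall>q\<in>U. (g has_derivative (\<lambda>v. G q \<bullet> v)) (at q) \<and> G q \<noteq> 0) \<and>
        M \<inter> U = {q\<in>U. g q = 0} \<and>
        (\<forall>q\<in>M \<inter> U. N q = (1 / norm (G q)) *\<^sub>R G q))"

definition tangent_space :: "(real^'n \<Rightarrow> real^'n) \<Rightarrow> real^'n \<Rightarrow> (real^'n) set" where
  "tangent_space N p = {v. N p \<bullet> v = 0}"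

definition helix_directions :: "(real^'n) set \<Rightarrow> (real^'n \<Rightarrow> real^'n) \<Rightarrow> (real^'n) set" where
  "helix_directions M N = {d. \<exists>c. \<forall>p\<in>M. N p \<bullet> d = c}"

definition strong_helix :: "nat \<Rightarrow> (real^'n) set \<Rightarrow> (real^'n \<Rightarrow> real^'n) \<Rightarrow> bool" where
  "strong_helix r M N \<longleftrightarrow> subspace (helix_directions M N) \<and> dim (helix_directions M N) = r"

definition geodesic_on :: "(real^'n) set \<Rightarrow> (real^'n \<Rightarrow> real^'n) \<Rightarrow> (real \<Rightarrow> real^'n) \<Rightarrow> real set \<Rightarrow> bool" where
  "geodesic_on M N \<alpha> I \<longleftrightarrow>
     \<alpha> ` I \<subseteq> M \<and>
     (\<forall>s\<in>I. \<alpha> differentiable (at s) \<and>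
        (\<lambda>t. vector_derivative \<alpha> (at t)) differentiable (at s) \<and>
        (\<forall>v\<in>tangent_space N (\<alpha> s).
           vector_derivative (\<lambda>t. vector_derivative \<alpha> (at t)) (at s) \<bullet> v = 0))"

definition frenet_frame :: "(real \<Rightarrow> real^'n) \<Rightarrow> real set \<Rightarrow> (nat \<Rightarrow> real \<Rightarrow> real^'n) \<Rightarrow> (nat \<Rightarrow> real \<Rightarrow> real) \<Rightarrow> bool" where
  "frenet_frame \<alpha> I V k \<longleftrightarrow>
     (let n = CARD('n) in
     (\<forall>s\<in>I.
        (\<forall>i j. 1 \<le> i \<and> i \<le> n \<and> 1 \<le> j \<and> j \<le> n \<longrightarrow> V i s \<bullet> V j s = (if i = j then 1 else 0)) \<and>
        (\<forall>i. 1 \<le> i \<and> i < n \<longrightarrow> k i s \<noteq> 0) \<and>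
        (\<alpha> has_vector_derivative V 1 s) (at s) \<and>
        (V 1 has_vector_derivative (k 1 s *\<^sub>R V 2 s)) (at s) \<and>
        (\<forall>i. 1 < i \<and> i < n \<longrightarrow>
           (V i has_vector_derivative (- (k (i - 1) s) *\<^sub>R V (i - 1) s + k i s *\<^sub>R V (i + 1) s)) (at s)) \<and>
        (V n has_vector_derivative (- (k (n - 1) s) *\<^sub>R V (n - 1) s)) (at s)))"

end

theory Submission
  imports Defs
begin

text \<open>Along a geodesic the acceleration \<open>k\<^sub>1 V\<^sub>2\<close> is normal to \<open>M\<close> and \<open>k\<^sub>1 \<noteq> 0\<close>, so the
principal normal \<open>V\<^sub>2\<close> is a unit vector along the unit normal: \<open>V\<^sub>2 = \<plusminus>N \<circ> \<alpha>\<close>. By continuity on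
the interval \<open>I\<close> the sign is constant, hence for a helix direction \<open>d\<close> the function
\<open>\<langle>V\<^sub>2, d\<rangle> = \<plusminus>\<langle>N \<circ> \<alpha>, d\<rangle>\<close> is constant and its derivative \<open>\<langle>V\<^sub>2', d\<rangle>\<close> vanishes.\<close>

lemma hypersurface_normal_norm:
  assumes "hypersurface_with_normal M N" and "p \<in> M"
  shows "norm (N p) = 1"
proof -
  obtain U G where "p \<in> U" and "G p \<noteq> 0" and "\<forall>q\<in>M \<inter> U. N q = (1 / norm (G q)) *\<^sub>R G q"
    using assms unfolding hypersurface_with_normal_def by blast
  then have "N p = (1 / norm (G p)) *\<^sub>R G p"
    using \<open>p \<in> M\<close> by blast
  then show ?thesis
    using \<open>G p \<noteq> 0\<close> by simp
qed

lemma eq_inner_scaleR_if_orthogonal_to_complement: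
  fixes n v :: "'a::real_inner"
  assumes "norm n = 1" and "\<And>w. n \<bullet> w = 0 \<Longrightarrow> v \<bullet> w = 0"
  shows "v = (v \<bullet> n) *\<^sub>R n"
proof -
  define w where "w = v - (v \<bullet> n) *\<^sub>R n"
  have nn: "n \<bullet> n = 1"
    using assms(1) by (simp add: norm_eq_1)
  have "n \<bullet> w = 0"
    unfolding w_def using nn by (simp add: inner_diff_right inner_commute)
  then have "w \<bullet> w = v \<bullet> w - (v \<bullet> n) * (n \<bullet> w)"
    using assms(2) unfolding w_def by (simp add: inner_diff_left)
  also have "\<dots> = 0"
    using \<open>n \<bullet> w = 0\<close> assms(2) by simp
  finally show ?thesis
    unfolding w_def by simp
qed

lemma has_vector_derivative_eq_0_if_constant_on_open:
  assumes "(f has_vector_derivative D) (at s)" and "f constant_on S" and "open S" and "s \<in> S"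
  shows "D = 0"
proof -
  have "(f has_vector_derivative 0) (at s)"
  proof (rule has_vector_derivative_transform_within_open[OF _ \<open>open S\<close> \<open>s \<in> S\<close>])
    show "((\<lambda>_. f s) has_vector_derivative 0) (at s)"
      by (rule has_vector_derivative_const)
    show "\<And>x. x \<in> S \<Longrightarrow> f s = f x"
      using assms(2,4) unfolding constant_on_def by metis
  qed
  then show ?thesis
    using assms(1) vector_derivative_unique_at by blast
qed

lemma frenet_frameD:
  assumes "frenet_frame \<alpha> I V k" and "CARD('n) \<ge> 2" and "s \<in> I"
  shows "norm (V 2 s :: real^'n) = 1"
    and "k 1 s \<noteq> 0"
    and "(\<alpha> has_vector_derivative V 1 s) (at s)"
    and "(V 1 has_vector_derivative k 1 s *\<^sub>R V 2 s) (at s)"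
    and "V 2 differentiable at s"
proof -
  let ?n = "CARD('n)"
  have orthonormal: "\<forall>i j. 1 \<le> i \<and> i \<le> ?n \<and> 1 \<le> j \<and> j \<le> ?n \<longrightarrow>
      V i s \<bullet> V j s = (if i = j then 1 else 0)"
    and curvature: "\<forall>i. 1 \<le> i \<and> i < ?n \<longrightarrow> k i s \<noteq> 0"
    and "(\<alpha> has_vector_derivative V 1 s) (at s)"
    and "(V 1 has_vector_derivative (k 1 s *\<^sub>R V 2 s)) (at s)"
    and middle: "\<forall>i. 1 < i \<and> i < ?n \<longrightarrow> (V i has_vector_derivative
      (- (k (i - 1) s) *\<^sub>R V (i - 1) s + k i s *\<^sub>R V (i + 1) s)) (at s)"
    and last: "(V ?n has_vector_derivative (- (k (?n - 1) s) *\<^sub>R V (?n - 1) s)) (at s)"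
    using assms(1,3) unfolding frenet_frame_def Let_def by blast+
  then show "(\<alpha> has_vector_derivative V 1 s) (at s)"
    and "(V 1 has_vector_derivative k 1 s *\<^sub>R V 2 s) (at s)"
    by blast+
  have "V 2 s \<bullet> V 2 s = 1"
    using orthonormal[rule_format, of 2 2] assms(2) by simp
  then show "norm (V 2 s) = 1"
    by (simp add: norm_eq_1)
  show "k 1 s \<noteq> 0"
    using curvature[rule_format, of 1] assms(2) by simp
  show "V 2 differentiable at s"
  proof (cases "?n = 2")
    case True
    then show ?thesis
      using last differentiableI_vector by fastforce
  next
    case False
    then have "1 < (2::nat) \<and> 2 < ?n"
      using assms(2) by auto
    then show ?thesis
      using middle differentiableI_vector by blast
  qed
qed

lemma frenet_acceleration:
  assumes "frenet_frame \<alpha> I V k" and "CARD('n) \<ge> 2" and "open I" and "s \<in> I"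
  shows "vector_derivative (\<lambda>t. vector_derivative \<alpha> (at t)) (at s) = k 1 s *\<^sub>R (V 2 s :: real^'n)"
proof -
  have "((\<lambda>t. vector_derivative \<alpha> (at t)) has_vector_derivative k 1 s *\<^sub>R V 2 s) (at s)"
  proof (rule has_vector_derivative_transform_within_open[OF _ \<open>open I\<close> \<open>s \<in> I\<close>])
    show "(V 1 has_vector_derivative k 1 s *\<^sub>R V 2 s) (at s)"
      using frenet_frameD[OF assms(1,2,4)] by blast
    show "\<And>x. x \<in> I \<Longrightarrow> V 1 x = vector_derivative \<alpha> (at x)"
      using frenet_frameD(3)[OF assms(1,2)] by (metis vector_derivative_at)
  qed
  then show ?thesis
    by (rule vector_derivative_at)
qed

lemma geodesic_principal_normal_eq_normal:
  assumes "CARD('n) \<ge> 2" and "hypersurface_with_normal M N" and "open I"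
    and "frenet_frame \<alpha> I V k" and "geodesic_on M N \<alpha> I" and "s \<in> I"
  shows "V 2 s = (V 2 s \<bullet> N (\<alpha> s)) *\<^sub>R N (\<alpha> s :: real^'n)"
    and "\<bar>V 2 s \<bullet> N (\<alpha> s)\<bar> = 1"
proof -
  have "\<alpha> ` I \<subseteq> M"
    using assms(5) unfolding geodesic_on_def by blast
  then have "\<alpha> s \<in> M"
    using assms(6) by blast
  then have unit_N: "norm (N (\<alpha> s)) = 1"
    using assms(2) hypersurface_normal_norm by blast
  have "V 2 s \<bullet> w = 0" if "N (\<alpha> s) \<bullet> w = 0" for w
  proof -
    have "w \<in> tangent_space N (\<alpha> s)"
      using that unfolding tangent_space_def by simp
    then have "vector_derivative (\<lambda>t. vector_derivative \<alpha> (at t)) (at s) \<bullet> w = 0"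
      using assms(5,6) unfolding geodesic_on_def by blast
    then have "(k 1 s *\<^sub>R V 2 s) \<bullet> w = 0"
      using frenet_acceleration[OF assms(4,1,3,6)] by simp
    then show ?thesis
      using frenet_frameD(2)[OF assms(4,1,6)] by simp
  qed
  then show V2: "V 2 s = (V 2 s \<bullet> N (\<alpha> s)) *\<^sub>R N (\<alpha> s)"
    using eq_inner_scaleR_if_orthogonal_to_complement[OF unit_N] by blast
  have "1 = norm (V 2 s)"
    using frenet_frameD(1)[OF assms(4,1,6)] by simp
  also have "\<dots> = \<bar>V 2 s \<bullet> N (\<alpha> s)\<bar>"
    by (subst V2) (simp add: unit_N)
  finally show "\<bar>V 2 s \<bullet> N (\<alpha> s)\<bar> = 1" ..
qed

lemma geodesic_principal_normal_eq_signed_normal: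
  assumes "CARD('n) \<ge> 2" and "hypersurface_with_normal M N"
    and "open I" and "is_interval I"
    and "frenet_frame \<alpha> I V k" and "geodesic_on M N \<alpha> I"
  obtains \<sigma> where "\<And>s. s \<in> I \<Longrightarrow> V 2 s = \<sigma> *\<^sub>R N (\<alpha> s :: real^'n)"
proof -
  define \<tau> where "\<tau> s = V 2 s \<bullet> N (\<alpha> s)" for s
  have "continuous_on M N"
    using assms(2) unfolding hypersurface_with_normal_def by blast
  moreover have "continuous_on I \<alpha>"
    using frenet_frameD(3)[OF assms(5,1)]
    by (meson continuous_at_imp_continuous_on has_vector_derivative_continuous)
  moreover have "\<alpha> ` I \<subseteq> M"
    using assms(6) unfolding geodesic_on_def by blast
  moreover have "continuous_on I (V 2)"
    using frenet_frameD(5)[OF assms(5,1)]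
    by (meson continuous_at_imp_continuous_on differentiable_imp_continuous_within)
  ultimately have "continuous_on I \<tau>"
    unfolding \<tau>_def by (intro continuous_intros continuous_on_compose2[of M N I \<alpha>])
  moreover have "\<tau> ` I \<subseteq> {-1, 1}"
  proof (rule image_subsetI)
    fix s
    assume "s \<in> I"
    then have "\<bar>\<tau> s\<bar> = 1"
      using geodesic_principal_normal_eq_normal(2)[OF assms(1,2,3,5,6)] unfolding \<tau>_def by blast
    then show "\<tau> s \<in> {-1, 1}"
      by (auto simp: abs_eq_iff)
  qed
  ultimately have "\<tau> constant_on I"
    using continuous_finite_range_constant assms(4) is_interval_connected
    by (metis finite.emptyI finite.insertI finite_subset)
  then obtain \<sigma> where "\<And>s. s \<in> I \<Longrightarrow> \<tau> s = \<sigma>"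
    unfolding constant_on_def by blast
  then show ?thesis
    using that geodesic_principal_normal_eq_normal(1)[OF assms(1,2,3,5,6)] unfolding \<tau>_def
    by metis
qed

theorem theorem3p5:
  fixes M :: "(real^'n) set" and N :: "real^'n \<Rightarrow> real^'n" and r :: nat
    and \<alpha> :: "real \<Rightarrow> real^'n" and I :: "real set"
    and V :: "nat \<Rightarrow> real \<Rightarrow> real^'n" and k :: "nat \<Rightarrow> real \<Rightarrow> real"
  assumes "CARD('n) \<ge> 2"
    and "hypersurface_with_normal M N"
    and "strong_helix r M N"
    and "open I" and "is_interval I"
    and "\<alpha> ` I \<subseteq> M"
    and "frenet_frame \<alpha> I V k"
    and "geodesic_on M N \<alpha> I"
  shows "\<forall>d\<in>helix_directions M N. \<forall>s\<in>I. vector_derivative (V 2) (at s) \<bullet> d = 0"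
proof (intro ballI)
  fix d s
  assume "d \<in> helix_directions M N" and "s \<in> I"
  then obtain c where c: "\<And>p. p \<in> M \<Longrightarrow> N p \<bullet> d = c"
    unfolding helix_directions_def by blast
  obtain \<sigma> where \<sigma>: "\<And>x. x \<in> I \<Longrightarrow> V 2 x = \<sigma> *\<^sub>R N (\<alpha> x)"
    using geodesic_principal_normal_eq_signed_normal[OF assms(1,2,4,5,7,8)] by blast
  have "(\<lambda>x. V 2 x \<bullet> d) constant_on I"
    unfolding constant_on_def using \<sigma> c assms(6) by (metis image_subset_iff inner_scaleR_left)
  moreover have "((\<lambda>x. V 2 x \<bullet> d) has_vector_derivative vector_derivative (V 2) (at s) \<bullet> d) (at s)"
    using frenet_frameD(5)[OF assms(7,1) \<open>s \<in> I\<close>]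
    by (intro bounded_linear.has_vector_derivative[OF bounded_linear_inner_left])
      (simp add: vector_derivative_works)
  ultimately show "vector_derivative (V 2) (at s) \<bullet> d = 0"
    using has_vector_derivative_eq_0_if_constant_on_open assms(4) \<open>s \<in> I\<close> by blast
qed

end
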